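(* Let $\mathbf D$ be a maximal (by inclusion) clique of tilings, i.e. a set of pairwise compatible tilings not properly contained in another set of pairwise compatible tilings. Then $\mathbf D$ is a distributive sublattice of the poset of tilings ordered by inclusion; that is, $\mathbf D$ is closed under $\cap$ and $\cup$.
   Context: Fix an integer $n\ge 3$ and write $[n]=\{1,\dots,n\}$. Let $\Lambda$ be the set of 3-element subsets of $[n]$; a triple $\{i,j,k\}$ with $i<j<k$ is written $ijk$. For a 4-element subset $F=\{i<j<k<l\}$ of $[n]$, the stick of $F$ is the sequence $(ijk,\ ijl,\ ikl,\ jkl)$. A tiling (the inversion set of a rhombus tiling of the zonogon $Z(n;2)$) is a subset $T\subseteq\Lambda$ such that for every 4-element $F\subseteq[n]$, $T\cap\mathrm{stick}(F)$ is an initial segment or a final segment of the stick (empty set and whole stick allowed). Two tilings $T,T'$ are compatible if both $T\cap T'$ and $T\cup T'$ are tilings. *)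

theory Defs
  imports Main
begin

definition Lambda :: "nat \<Rightarrow> nat set set" where
  "Lambda n = {S. S \<subseteq> {1..n} \<and> card S = 3}"

definition stick :: "nat \<Rightarrow> nat \<Rightarrow> nat \<Rightarrow> nat \<Rightarrow> nat set list" where
  "stick i j k l = [{i,j,k}, {i,j,l}, {i,k,l}, {j,k,l}]"

definition is_tiling :: "nat \<Rightarrow> nat set set \<Rightarrow> bool" where
  "is_tiling n T \<longleftrightarrow> T \<subseteq> Lambda n \<and>
     (\<forall>i j k l. 1 \<le> i \<and> i < j \<and> j < k \<and> k < l \<and> l \<le> n \<longrightarrow>
        (\<exists>m \<le> 4. T \<inter> set (stick i j k l) = set (take m (stick i j k l))
                \<or> T \<inter> set (stick i j k l) = set (drop m (stick i j k l))))"

definition compatible :: "nat \<Rightarrow> nat set set \<Rightarrow> nat set set \<Rightarrow> bool" where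
  "compatible n T T' \<longleftrightarrow> is_tiling n (T \<inter> T') \<and> is_tiling n (T \<union> T')"

definition is_clique :: "nat \<Rightarrow> nat set set set \<Rightarrow> bool" where
  "is_clique n D \<longleftrightarrow> (\<forall>T\<in>D. is_tiling n T) \<and> (\<forall>T\<in>D. \<forall>T'\<in>D. compatible n T T')"

definition is_maximal_clique :: "nat \<Rightarrow> nat set set set \<Rightarrow> bool" where
  "is_maximal_clique n D \<longleftrightarrow> is_clique n D \<and> (\<forall>D'. is_clique n D' \<and> D \<subseteq> D' \<longrightarrow> D' = D)"

end

theory Submission
  imports Defs
begin

text \<open>
  On a stick, a tiling cuts out an initial or a final segment, i.e. its membership pattern along
  the stick is monotone. A Boolean sequence is monotone iff no entry differs from two entries
  surrounding it. If positions \<open>a < b < c\<close> witnessed such a violation for \<open>(T \<inter> T') \<inter> S\<close>,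
  \<open>(T \<inter> T') \<union> S\<close>, \<open>(T \<union> T') \<inter> S\<close> or \<open>(T \<union> T') \<union> S\<close>, it would already witness one for one of
  the pairwise meets and joins of \<open>T, T', S\<close>. Hence \<open>T \<inter> T'\<close> and \<open>T \<union> T'\<close> are tilings
  compatible with every member of a clique containing \<open>T\<close> and \<open>T'\<close>, and maximality puts them
  into the clique.
\<close>

lemma mono_on_iff_antimono_on_Not:
  "mono_on I p \<longleftrightarrow> antimono_on I (\<lambda>i. \<not> p i)" for p :: "'a::order \<Rightarrow> bool"
  by (auto simp: monotone_on_def)

lemma mono_or_antimono_on_iff_middle:
  fixes p :: "'a::linorder \<Rightarrow> bool"
  shows "mono_on I p \<or> antimono_on I p \<longleftrightarrow>
    (\<forall>a\<in>I. \<forall>b\<in>I. \<forall>c\<in>I. a < b \<longrightarrow> b < c \<longrightarrow> p b = p a \<or> p b = p c)"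
proof
  assume "mono_on I p \<or> antimono_on I p"
  then show "\<forall>a\<in>I. \<forall>b\<in>I. \<forall>c\<in>I. a < b \<longrightarrow> b < c \<longrightarrow> p b = p a \<or> p b = p c"
    unfolding monotone_on_def le_bool_def by (meson less_imp_le)
next
  assume middle: "\<forall>a\<in>I. \<forall>b\<in>I. \<forall>c\<in>I. a < b \<longrightarrow> b < c \<longrightarrow> p b = p a \<or> p b = p c"
  show "mono_on I p \<or> antimono_on I p"
  proof (rule ccontr)
    assume "\<not> (mono_on I p \<or> antimono_on I p)"
    then obtain x y u v where "x \<in> I" "y \<in> I" "x < y" "p x" "\<not> p y"
      and "u \<in> I" "v \<in> I" "u < v" "\<not> p u" "p v"
      unfolding monotone_on_def le_bool_def by (metis order.order_iff_strict)
    moreover have "y \<noteq> v"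
      using \<open>\<not> p y\<close> \<open>p v\<close> by blast
    ultimately show False
      using middle by (metis linorder_neqE)
  qed
qed

lemma antimono_on_lessThan_iff:
  fixes p :: "nat \<Rightarrow> bool"
  shows "antimono_on {..<N} p \<longleftrightarrow> (\<exists>m\<le>N. \<forall>i<N. p i \<longleftrightarrow> i < m)"
proof
  assume anti: "antimono_on {..<N} p"
  define m where "m = (LEAST i. i = N \<or> \<not> p i)"
  have "m \<le> N"
    unfolding m_def by (rule Least_le) simp
  moreover have "p i \<longleftrightarrow> i < m" if "i < N" for i
  proof
    assume "p i"
    show "i < m"
    proof (rule ccontr)
      assume "\<not> i < m"
      have "m = N \<or> \<not> p m"
        unfolding m_def by (rule LeastI[of _ N]) simp
      then show False
        using anti \<open>p i\<close> \<open>\<not> i < m\<close> \<open>i < N\<close> by (auto simp: monotone_on_def)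
    qed
  next
    assume "i < m"
    then show "p i"
      using \<open>i < N\<close> not_less_Least unfolding m_def by blast
  qed
  ultimately show "\<exists>m\<le>N. \<forall>i<N. p i \<longleftrightarrow> i < m"
    by blast
qed (auto simp: monotone_on_def)

lemma mono_on_lessThan_iff:
  fixes p :: "nat \<Rightarrow> bool"
  shows "mono_on {..<N} p \<longleftrightarrow> (\<exists>m\<le>N. \<forall>i<N. p i \<longleftrightarrow> m \<le> i)"
proof -
  have "(\<not> p i \<longleftrightarrow> i < m) \<longleftrightarrow> (p i \<longleftrightarrow> m \<le> i)" for i m
    by auto
  then show ?thesis
    unfolding mono_on_iff_antimono_on_Not antimono_on_lessThan_iff by presburger
qed

lemma mono_or_antimono_on_lessThan_iff_middle:
  fixes p :: "nat \<Rightarrow> bool"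
  shows "mono_on {..<N} p \<or> antimono_on {..<N} p \<longleftrightarrow>
    (\<forall>a b c. a < b \<longrightarrow> b < c \<longrightarrow> c < N \<longrightarrow> p b = p a \<or> p b = p c)"
  unfolding mono_or_antimono_on_iff_middle lessThan_iff
  by (meson lessThan_iff order.strict_trans)

lemma nth_mem_set_take_iff:
  assumes "distinct L" "i < length L"
  shows "L ! i \<in> set (take m L) \<longleftrightarrow> i < m"
  using assms by (auto simp: in_set_conv_nth nth_eq_iff_index_eq)

lemma nth_mem_set_drop_iff:
  assumes "distinct L" "i < length L"
  shows "L ! i \<in> set (drop m L) \<longleftrightarrow> m \<le> i"
  using assms by (auto simp: in_set_conv_nth nth_eq_iff_index_eq intro: exI[of _ "i - m"])

lemma Int_set_eq_set_take_iff:
  assumes "distinct L"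
  shows "X \<inter> set L = set (take m L) \<longleftrightarrow> (\<forall>i<length L. L ! i \<in> X \<longleftrightarrow> i < m)"
proof -
  have "X \<inter> set L = set (take m L) \<longleftrightarrow> (\<forall>x\<in>set L. x \<in> X \<longleftrightarrow> x \<in> set (take m L))"
    using set_take_subset[of m L] by blast
  then show ?thesis
    by (simp add: all_set_conv_all_nth nth_mem_set_take_iff[OF assms])
qed

lemma Int_set_eq_set_drop_iff:
  assumes "distinct L"
  shows "X \<inter> set L = set (drop m L) \<longleftrightarrow> (\<forall>i<length L. L ! i \<in> X \<longleftrightarrow> m \<le> i)"
proof -
  have "X \<inter> set L = set (drop m L) \<longleftrightarrow> (\<forall>x\<in>set L. x \<in> X \<longleftrightarrow> x \<in> set (drop m L))"
    using set_drop_subset[of m L] by blast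
  then show ?thesis
    by (simp add: all_set_conv_all_nth nth_mem_set_drop_iff[OF assms])
qed

definition end_segment :: "'a list \<Rightarrow> 'a set \<Rightarrow> bool" where
  "end_segment L X \<longleftrightarrow>
     (\<exists>m\<le>length L. X \<inter> set L = set (take m L) \<or> X \<inter> set L = set (drop m L))"

lemma end_segment_iff_mono_or_antimono:
  assumes "distinct L"
  shows "end_segment L X \<longleftrightarrow>
    mono_on {..<length L} (\<lambda>i. L ! i \<in> X) \<or> antimono_on {..<length L} (\<lambda>i. L ! i \<in> X)"
  unfolding end_segment_def mono_on_lessThan_iff antimono_on_lessThan_iff
    Int_set_eq_set_take_iff[OF assms] Int_set_eq_set_drop_iff[OF assms]
  by blast

lemma end_segment_iff_middle:
  assumes "distinct L"
  shows "end_segment L X \<longleftrightarrow>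
    (\<forall>a b c. a < b \<longrightarrow> b < c \<longrightarrow> c < length L \<longrightarrow>
       (L ! b \<in> X \<longleftrightarrow> L ! a \<in> X) \<or> (L ! b \<in> X \<longleftrightarrow> L ! c \<in> X))"
  unfolding end_segment_iff_mono_or_antimono[OF assms] mono_or_antimono_on_lessThan_iff_middle ..

lemma end_segment_middleI:
  assumes "distinct L"
    and "\<And>a b c. a < b \<Longrightarrow> b < c \<Longrightarrow> c < length L \<Longrightarrow>
           (L ! b \<in> X \<longleftrightarrow> L ! a \<in> X) \<or> (L ! b \<in> X \<longleftrightarrow> L ! c \<in> X)"
  shows "end_segment L X"
  using assms by (simp add: end_segment_iff_middle)

lemma end_segment_middleD:
  assumes "distinct L" "end_segment L X" "a < b" "b < c" "c < length L"
  shows "(L ! b \<in> X \<longleftrightarrow> L ! a \<in> X) \<or> (L ! b \<in> X \<longleftrightarrow> L ! c \<in> X)"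
  using assms by (simp add: end_segment_iff_middle)

lemma end_segment_Int3:
  assumes "distinct L"
    and "end_segment L (A \<inter> B)" "end_segment L (A \<inter> C)" "end_segment L (B \<inter> C)"
  shows "end_segment L (A \<inter> B \<inter> C)"
proof (rule end_segment_middleI[OF assms(1)])
  fix a b c assume abc: "a < b" "b < c" "c < length L"
  note middle = end_segment_middleD[OF assms(1) _ abc]
  show "(L ! b \<in> A \<inter> B \<inter> C \<longleftrightarrow> L ! a \<in> A \<inter> B \<inter> C) \<or>
      (L ! b \<in> A \<inter> B \<inter> C \<longleftrightarrow> L ! c \<in> A \<inter> B \<inter> C)"
    using middle[OF assms(2)] middle[OF assms(3)] middle[OF assms(4)] by auto
qed

lemma end_segment_Int_Un:
  assumes "distinct L"
    and "end_segment L (A \<inter> B)" "end_segment L C" "end_segment L (A \<union> C)" "end_segment L (B \<union> C)"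
  shows "end_segment L (A \<inter> B \<union> C)"
proof (rule end_segment_middleI[OF assms(1)])
  fix a b c assume abc: "a < b" "b < c" "c < length L"
  note middle = end_segment_middleD[OF assms(1) _ abc]
  show "(L ! b \<in> A \<inter> B \<union> C \<longleftrightarrow> L ! a \<in> A \<inter> B \<union> C) \<or>
      (L ! b \<in> A \<inter> B \<union> C \<longleftrightarrow> L ! c \<in> A \<inter> B \<union> C)"
    using middle[OF assms(2)] middle[OF assms(3)] middle[OF assms(4)] middle[OF assms(5)] by auto
qed

lemma end_segment_Un_Int:
  assumes "distinct L"
    and "end_segment L (A \<union> B)" "end_segment L C" "end_segment L (A \<inter> C)" "end_segment L (B \<inter> C)"
  shows "end_segment L ((A \<union> B) \<inter> C)"
proof (rule end_segment_middleI[OF assms(1)])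
  fix a b c assume abc: "a < b" "b < c" "c < length L"
  note middle = end_segment_middleD[OF assms(1) _ abc]
  show "(L ! b \<in> (A \<union> B) \<inter> C \<longleftrightarrow> L ! a \<in> (A \<union> B) \<inter> C) \<or>
      (L ! b \<in> (A \<union> B) \<inter> C \<longleftrightarrow> L ! c \<in> (A \<union> B) \<inter> C)"
    using middle[OF assms(2)] middle[OF assms(3)] middle[OF assms(4)] middle[OF assms(5)] by auto
qed

lemma end_segment_Un3:
  assumes "distinct L"
    and "end_segment L (A \<union> B)" "end_segment L (A \<union> C)" "end_segment L (B \<union> C)"
  shows "end_segment L (A \<union> B \<union> C)"
proof (rule end_segment_middleI[OF assms(1)])
  fix a b c assume abc: "a < b" "b < c" "c < length L"
  note middle = end_segment_middleD[OF assms(1) _ abc]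
  show "(L ! b \<in> A \<union> B \<union> C \<longleftrightarrow> L ! a \<in> A \<union> B \<union> C) \<or>
      (L ! b \<in> A \<union> B \<union> C \<longleftrightarrow> L ! c \<in> A \<union> B \<union> C)"
    using middle[OF assms(2)] middle[OF assms(3)] middle[OF assms(4)] by auto
qed

lemma length_stick: "length (stick i j k l) = 4"
  by (simp add: stick_def)

lemma stick_distinct:
  assumes "i < j" "j < k" "k < l"
  shows "distinct (stick i j k l)"
  using assms by (auto simp: stick_def insert_eq_iff)

lemma is_tiling_iff_end_segment:
  "is_tiling n T \<longleftrightarrow> T \<subseteq> Lambda n \<and>
     (\<forall>i j k l. 1 \<le> i \<and> i < j \<and> j < k \<and> k < l \<and> l \<le> n \<longrightarrow> end_segment (stick i j k l) T)"
  unfolding is_tiling_def end_segment_def length_stick ..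

lemma is_tilingI:
  assumes "T \<subseteq> Lambda n"
    and "\<And>i j k l. 1 \<le> i \<Longrightarrow> i < j \<Longrightarrow> j < k \<Longrightarrow> k < l \<Longrightarrow> l \<le> n \<Longrightarrow>
           end_segment (stick i j k l) T"
  shows "is_tiling n T"
  using assms unfolding is_tiling_iff_end_segment by blast

lemma is_tilingD:
  assumes "is_tiling n T"
  shows "T \<subseteq> Lambda n"
    and "1 \<le> i \<Longrightarrow> i < j \<Longrightarrow> j < k \<Longrightarrow> k < l \<Longrightarrow> l \<le> n \<Longrightarrow> end_segment (stick i j k l) T"
  using assms unfolding is_tiling_iff_end_segment by blast+

lemma is_tiling_Int3:
  assumes "is_tiling n (A \<inter> B)" "is_tiling n (A \<inter> C)" "is_tiling n (B \<inter> C)"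
  shows "is_tiling n (A \<inter> B \<inter> C)"
proof (rule is_tilingI)
  show "A \<inter> B \<inter> C \<subseteq> Lambda n"
    using is_tilingD(1)[OF assms(1)] by blast
qed (auto intro!: end_segment_Int3 stick_distinct is_tilingD(2) assms)

lemma is_tiling_Int_Un:
  assumes "is_tiling n (A \<inter> B)" "is_tiling n C" "is_tiling n (A \<union> C)" "is_tiling n (B \<union> C)"
  shows "is_tiling n (A \<inter> B \<union> C)"
proof (rule is_tilingI)
  show "A \<inter> B \<union> C \<subseteq> Lambda n"
    using is_tilingD(1)[OF assms(1)] is_tilingD(1)[OF assms(2)] by blast
qed (auto intro!: end_segment_Int_Un stick_distinct is_tilingD(2) assms)

lemma is_tiling_Un_Int:
  assumes "is_tiling n (A \<union> B)" "is_tiling n C" "is_tiling n (A \<inter> C)" "is_tiling n (B \<inter> C)"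
  shows "is_tiling n ((A \<union> B) \<inter> C)"
proof (rule is_tilingI)
  show "(A \<union> B) \<inter> C \<subseteq> Lambda n"
    using is_tilingD(1)[OF assms(2)] by blast
qed (auto intro!: end_segment_Un_Int stick_distinct is_tilingD(2) assms)

lemma is_tiling_Un3:
  assumes "is_tiling n (A \<union> B)" "is_tiling n (A \<union> C)" "is_tiling n (B \<union> C)"
  shows "is_tiling n (A \<union> B \<union> C)"
proof (rule is_tilingI)
  show "A \<union> B \<union> C \<subseteq> Lambda n"
    using is_tilingD(1)[OF assms(1)] is_tilingD(1)[OF assms(2)] by blast
qed (auto intro!: end_segment_Un3 stick_distinct is_tilingD(2) assms)

lemma compatible_sym: "compatible n A B \<Longrightarrow> compatible n B A"
  unfolding compatible_def by (simp add: Int_commute Un_commute)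

lemma compatible_Int:
  assumes "compatible n A B" "compatible n A C" "compatible n B C" "is_tiling n C"
  shows "compatible n (A \<inter> B) C"
  using assms is_tiling_Int3 is_tiling_Int_Un unfolding compatible_def by blast

lemma compatible_Un:
  assumes "compatible n A B" "compatible n A C" "compatible n B C" "is_tiling n C"
  shows "compatible n (A \<union> B) C"
  using assms is_tiling_Un_Int is_tiling_Un3 unfolding compatible_def by blast

lemma maximal_clique_memI:
  assumes "is_maximal_clique n D" "is_tiling n X" "\<forall>T\<in>D. compatible n X T"
  shows "X \<in> D"
proof -
  have "compatible n X X"
    using \<open>is_tiling n X\<close> unfolding compatible_def by simp
  with assms have "is_clique n (insert X D)"
    unfolding is_maximal_clique_def is_clique_def by (auto intro: compatible_sym)
  with assms(1) show ?thesis
    unfolding is_maximal_clique_def by blast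
qed

theorem mainTheorem10:
  fixes n :: nat and D :: "nat set set set"
  assumes "n \<ge> 3"
    and "is_maximal_clique n D"
  shows "\<forall>T\<in>D. \<forall>T'\<in>D. T \<inter> T' \<in> D \<and> T \<union> T' \<in> D"
proof (intro ballI conjI)
  fix T T' assume "T \<in> D" "T' \<in> D"
  have "is_clique n D"
    using assms(2) unfolding is_maximal_clique_def by blast
  then have "compatible n T T'" and in_D_compatible:
      "\<And>S. S \<in> D \<Longrightarrow> compatible n T S \<and> compatible n T' S \<and> is_tiling n S"
    using \<open>T \<in> D\<close> \<open>T' \<in> D\<close> unfolding is_clique_def by blast+
  then have "is_tiling n (T \<inter> T')" "is_tiling n (T \<union> T')"
    unfolding compatible_def by blast+
  then show "T \<inter> T' \<in> D" "T \<union> T' \<in> D"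
    using assms(2) \<open>compatible n T T'\<close> in_D_compatible
    by (auto intro!: maximal_clique_memI compatible_Int compatible_Un)
qed

end
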